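(* Let $D$ be an infinite commutative unital integral domain. The weak graded identities $y_1y_2-y_2y_1$, $z_1z_2z_3-z_3z_2z_1$ and $y_1z_1+z_1y_1$ form a basis of the weak graded identities of the pair $(M_2(D),sl_2(D))$; that is, $Id(M_2(D),sl_2(D))$ equals the ideal of weak graded identities generated by these three polynomials.
   Context: Let $Y=\{y_1,y_2,\dots\}$ and $Z=\{z_1,z_2,\dots\}$ be disjoint countable sets of variables, $X=Y\cup Z$, and $D\langle X\rangle$ the free unital associative $D$-algebra on $X$, $\mathbb{Z}_2$-graded with the $y_i$ even and the $z_i$ odd. Let $L\langle X\rangle$ be the Lie subalgebra of $D\langle X\rangle$ (bracket $[a,b]=ab-ba$) generated by $X$, with induced grading $L\langle X\rangle^{(0)}\oplus L\langle X\rangle^{(1)}$. An ideal of weak graded identities is a two-sided ideal $J$ of $D\langle X\rangle$ closed under every algebra endomorphism of $D\langle X\rangle$ mapping each $y_i$ into $L\langle X\rangle^{(0)}$ and each $z_i$ into $L\langle X\rangle^{(1)}$; the ideal of weak graded identities generated by a set of polynomials is the smallest such ideal containing it. $M_2(D)$ is graded with diagonal matrices even and off-diagonal matrices odd; $sl_2(D)$ is the Lie algebra of traceless matrices with the induced grading. $Id(M_2(D),sl_2(D))$ is the set of $f(y_1,\dots,y_k,z_1,\dots,z_m)\in D\langle X\rangle$ vanishing under every substitution of each $y_i$ by an even element of $sl_2(D)$ and each $z_j$ by an odd element of $sl_2(D)$. *)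

theory Defs
  imports "HOL-Analysis.Analysis" "HOL-Library.Poly_Mapping"
begin

text \<open>Variables: Yv i is y_i (even), Zv i is z_i (odd).\<close>
datatype var = Yv nat | Zv nat

datatype word = Word (word_letters: "var list")

instantiation word :: monoid_add
begin
definition zero_word :: word where "zero_word = Word []"
definition plus_word :: "word \<Rightarrow> word \<Rightarrow> word" where
  "plus_word u v = Word (word_letters u @ word_letters v)"
instance
  by standard (simp_all add: zero_word_def plus_word_def)
end

text \<open>D<X>: finitely supported D-valued functions on words, with convolution product
  (i.e. the free unital associative D-algebra on X).\<close>
type_synonym 'a ncpoly = "word \<Rightarrow>\<^sub>0 'a"

definition var :: "var \<Rightarrow> 'a::ring_1 ncpoly" where
  "var v = Poly_Mapping.single (Word [v]) 1"

definition const :: "'a \<Rightarrow> 'a::ring_1 ncpoly" where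
  "const c = Poly_Mapping.single 0 c"

abbreviation yv :: "nat \<Rightarrow> 'a::ring_1 ncpoly" where "yv i \<equiv> var (Yv i)"
abbreviation zv :: "nat \<Rightarrow> 'a::ring_1 ncpoly" where "zv i \<equiv> var (Zv i)"

definition comm :: "'a::ring_1 \<Rightarrow> 'a \<Rightarrow> 'a" where
  "comm a b = a * b - b * a"

definition z_count :: "word \<Rightarrow> nat" where
  "z_count w = length (filter (\<lambda>v. case v of Zv _ \<Rightarrow> True | Yv _ \<Rightarrow> False) (word_letters w))"

text \<open>Homogeneous component of parity p (False = even, True = odd).\<close>
definition homog :: "bool \<Rightarrow> 'a::ring_1 ncpoly set" where
  "homog p = {f. \<forall>w \<in> Poly_Mapping.keys f. odd (z_count w) = p}"

inductive_set lie_alg :: "'a::ring_1 ncpoly set" where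
  gen: "var v \<in> lie_alg"
| zero: "0 \<in> lie_alg"
| add: "f \<in> lie_alg \<Longrightarrow> g \<in> lie_alg \<Longrightarrow> f + g \<in> lie_alg"
| smult: "f \<in> lie_alg \<Longrightarrow> const c * f \<in> lie_alg"
| bracket: "f \<in> lie_alg \<Longrightarrow> g \<in> lie_alg \<Longrightarrow> comm f g \<in> lie_alg"

definition lie_part :: "bool \<Rightarrow> 'a::ring_1 ncpoly set" where
  "lie_part p = lie_alg \<inter> homog p"

definition alg_endo :: "('a::comm_ring_1 ncpoly \<Rightarrow> 'a ncpoly) \<Rightarrow> bool" where
  "alg_endo h \<longleftrightarrow> (\<forall>f g. h (f + g) = h f + h g) \<and> (\<forall>f g. h (f * g) = h f * h g)
     \<and> h 1 = 1 \<and> (\<forall>c f. h (const c * f) = const c * h f)"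

definition graded_endo :: "('a::comm_ring_1 ncpoly \<Rightarrow> 'a ncpoly) \<Rightarrow> bool" where
  "graded_endo h \<longleftrightarrow> alg_endo h \<and> (\<forall>i. h (yv i) \<in> lie_part False) \<and> (\<forall>i. h (zv i) \<in> lie_part True)"

definition two_sided_ideal :: "'a::comm_ring_1 ncpoly set \<Rightarrow> bool" where
  "two_sided_ideal J \<longleftrightarrow> 0 \<in> J \<and> (\<forall>f\<in>J. \<forall>g\<in>J. f + g \<in> J)
     \<and> (\<forall>f\<in>J. \<forall>a b. a * f * b \<in> J)"

definition wg_ideal :: "'a::comm_ring_1 ncpoly set \<Rightarrow> bool" where
  "wg_ideal J \<longleftrightarrow> two_sided_ideal J \<and> (\<forall>h. graded_endo h \<longrightarrow> (\<forall>f\<in>J. h f \<in> J))"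

definition wg_ideal_gen :: "'a::comm_ring_1 ncpoly set \<Rightarrow> 'a ncpoly set" where
  "wg_ideal_gen S = \<Inter> {J. wg_ideal J \<and> S \<subseteq> J}"

type_synonym 'a m2 = "'a ^ 2 ^ 2"

definition smat :: "'a::semiring_1 \<Rightarrow> 'a m2 \<Rightarrow> 'a m2" where
  "smat c M = (\<chi> i j. c * M $ i $ j)"

definition sl2_even :: "'a::comm_ring_1 m2 set" where
  "sl2_even = {M. M $ 1 $ 2 = 0 \<and> M $ 2 $ 1 = 0 \<and> M $ 1 $ 1 + M $ 2 $ 2 = 0}"

text \<open>Odd elements of sl_2(D): off-diagonal matrices (automatically traceless).\<close>
definition sl2_odd :: "'a::comm_ring_1 m2 set" where
  "sl2_odd = {M. M $ 1 $ 1 = 0 \<and> M $ 2 $ 2 = 0}"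

definition word_eval :: "(var \<Rightarrow> 'a::comm_ring_1 m2) \<Rightarrow> word \<Rightarrow> 'a m2" where
  "word_eval \<sigma> w = foldr (\<lambda>v M. \<sigma> v ** M) (word_letters w) (mat 1)"

definition eval :: "(var \<Rightarrow> 'a::comm_ring_1 m2) \<Rightarrow> 'a ncpoly \<Rightarrow> 'a m2" where
  "eval \<sigma> f = (\<Sum>w\<in>Poly_Mapping.keys f. smat (Poly_Mapping.lookup f w) (word_eval \<sigma> w))"

definition Id_M2_sl2 :: "'a::comm_ring_1 ncpoly set" where
  "Id_M2_sl2 = {f. \<forall>\<sigma>. (\<forall>i. \<sigma> (Yv i) \<in> sl2_even) \<and> (\<forall>i. \<sigma> (Zv i) \<in> sl2_odd)
                      \<longrightarrow> eval \<sigma> f = 0}"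

end

theory Submission
  imports Defs "HOL-Computational_Algebra.Polynomial"
begin

text \<open>Modulo the three relations every monomial is a scalar multiple of a canonical one
  \<open>y\<^sub>i\<^sub>1 \<cdots> y\<^sub>i\<^sub>k z\<^sub>a\<^sub>1 z\<^sub>b\<^sub>1 z\<^sub>a\<^sub>2 z\<^sub>b\<^sub>2 \<cdots>\<close>, with the \<open>i\<close>'s sorted, and the \<open>a\<close>'s and the \<open>b\<close>'s
  sorted separately: the \<open>y\<close>'s commute, \<open>y\<close>'s and \<open>z\<close>'s anticommute, and
  \<open>z\<^sub>a z\<^sub>e z\<^sub>b = z\<^sub>b z\<^sub>e z\<^sub>a\<close>. Distinct canonical monomials remain linearly independent modulo the
  identities: under the generic substitution \<open>y\<^sub>i \<mapsto> diag(t\<^sub>i, -t\<^sub>i)\<close>, \<open>z\<^sub>i \<mapsto> [[0, u\<^sub>i], [v\<^sub>i, 0]]\<close>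
  the first row of the image of a canonical monomial sums to the commutative monomial
  \<open>t\<^sub>i\<^sub>1 \<cdots> t\<^sub>i\<^sub>k u\<^sub>a\<^sub>1 v\<^sub>b\<^sub>1 u\<^sub>a\<^sub>2 v\<^sub>b\<^sub>2 \<cdots>\<close>, which determines it, and over an infinite domain a
  polynomial that vanishes as a function has zero coefficients.\<close>

section \<open>The free algebra\<close>

lemma poly_mapping_sum_single:
  "(\<Sum>k\<in>Poly_Mapping.keys f. Poly_Mapping.single k (Poly_Mapping.lookup f k))
    = (f :: 'a \<Rightarrow>\<^sub>0 'b::comm_monoid_add)"
proof (rule poly_mapping_eqI)
  fix k
  show "Poly_Mapping.lookup
      (\<Sum>k\<in>Poly_Mapping.keys f. Poly_Mapping.single k (Poly_Mapping.lookup f k)) k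
    = Poly_Mapping.lookup f k"
    by (simp add: lookup_sum lookup_single when_def not_in_keys_iff_lookup_eq_zero)
qed

lemma poly_mapping_single_induct [case_names zero single add]:
  assumes "Q 0" and "\<And>k c. Q (Poly_Mapping.single k c)"
    and "\<And>f g. Q f \<Longrightarrow> Q g \<Longrightarrow> Q (f + g)"
  shows "Q (f :: 'a \<Rightarrow>\<^sub>0 'b::comm_monoid_add)"
proof -
  have "Q (\<Sum>k\<in>S. Poly_Mapping.single k (Poly_Mapping.lookup f k))" if "finite S" for S
    using that by (induction S rule: finite_induct) (simp_all add: assms)
  then show ?thesis
    using poly_mapping_sum_single[of f] by (metis finite_keys)
qed

definition mon :: "var list \<Rightarrow> 'a::comm_ring_1 ncpoly" where
  "mon l = Poly_Mapping.single (Word l) 1"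

lemma mon_append: "mon (xs @ ys) = (mon xs * mon ys :: 'a::comm_ring_1 ncpoly)"
  by (simp add: mon_def mult_single plus_word_def)

lemma mon_Nil: "mon [] = (1 :: 'a::comm_ring_1 ncpoly)"
  by (simp add: mon_def zero_word_def [symmetric])

lemma mon_Cons: "mon (v # l) = (var v * mon l :: 'a::comm_ring_1 ncpoly)"
  using mon_append [of "[v]" l] by (simp add: mon_def var_def)

lemma single_eq_const_mon:
  "Poly_Mapping.single w c = (const c * mon (word_letters w) :: 'a::comm_ring_1 ncpoly)"
  by (simp add: mon_def const_def mult_single)

lemma ncpoly_eq_sum_mon:
  "(f :: 'a::comm_ring_1 ncpoly)
     = (\<Sum>w\<in>Poly_Mapping.keys f. const (Poly_Mapping.lookup f w) * mon (word_letters w))"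
  by (simp add: single_eq_const_mon [symmetric] poly_mapping_sum_single)

lemma const_mult_commute: "const c * f = f * (const c :: 'a::comm_ring_1 ncpoly)"
  by (induction f rule: poly_mapping_single_induct)
    (simp_all add: const_def mult_single distrib_left distrib_right mult.commute)

lemma mult_const_left_commute: "f * (const c * g) = const c * (f * g :: 'a::comm_ring_1 ncpoly)"
  by (metis const_mult_commute mult.assoc)

lemma const_mult: "const (c * d) = (const c * const d :: 'a::comm_ring_1 ncpoly)"
  by (simp add: const_def mult_single)

lemma const_sum: "const (\<Sum>x\<in>A. F x) = (\<Sum>x\<in>A. const (F x) :: 'a::comm_ring_1 ncpoly)"
  by (induction A rule: infinite_finite_induct) (simp_all add: const_def single_add)

lemma const_uminus: "const (- c) = (- const c :: 'a::comm_ring_1 ncpoly)"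
  by (simp add: const_def single_uminus)

lemma const_0 [simp]: "const 0 = (0 :: 'a::comm_ring_1 ncpoly)"
  by (simp add: const_def)

lemma const_1 [simp]: "const 1 = (1 :: 'a::comm_ring_1 ncpoly)"
  by (simp add: const_def)

definition word_extend :: "(word \<Rightarrow> 'a::zero \<Rightarrow> 'b::comm_monoid_add) \<Rightarrow> (word \<Rightarrow>\<^sub>0 'a) \<Rightarrow> 'b" where
  "word_extend \<phi> f = (\<Sum>w\<in>Poly_Mapping.keys f. \<phi> w (Poly_Mapping.lookup f w))"

locale word_linear =
  fixes \<phi> :: "word \<Rightarrow> 'a::comm_ring_1 \<Rightarrow> 'b::comm_monoid_add"
  assumes \<phi>_zero: "\<phi> w 0 = 0" and \<phi>_add: "\<phi> w (c + d) = \<phi> w c + \<phi> w d"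
begin

lemma word_extend_superset:
  assumes "finite S" "Poly_Mapping.keys f \<subseteq> S"
  shows "word_extend \<phi> f = (\<Sum>w\<in>S. \<phi> w (Poly_Mapping.lookup f w))"
  unfolding word_extend_def
  by (rule sum.mono_neutral_left [OF assms]) (simp add: not_in_keys_iff_lookup_eq_zero \<phi>_zero)

lemma word_extend_zero [simp]: "word_extend \<phi> 0 = 0"
  by (simp add: word_extend_def)

lemma word_extend_single [simp]: "word_extend \<phi> (Poly_Mapping.single w c) = \<phi> w c"
  by (subst word_extend_superset [of "{w}"]) auto

lemma word_extend_add: "word_extend \<phi> (f + g) = word_extend \<phi> f + word_extend \<phi> g"
proof -
  let ?S = "Poly_Mapping.keys f \<union> Poly_Mapping.keys g"
  have "finite ?S" "Poly_Mapping.keys (f + g) \<subseteq> ?S"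
    by (simp_all add: keys_add)
  then show ?thesis
    by (simp add: word_extend_superset [of ?S] lookup_add \<phi>_add sum.distrib)
qed

text \<open>The multiplication \<open>m\<close> of the target is a parameter, since matrices multiply by \<open>**\<close>.\<close>

lemma word_extend_mult:
  fixes m :: "'b \<Rightarrow> 'b \<Rightarrow> 'b"
  assumes "\<And>x y z. m (x + y) z = m x z + m y z" "\<And>x y z. m x (y + z) = m x y + m x z"
    and "\<And>x. m 0 x = 0" "\<And>x. m x 0 = 0"
    and "\<And>u v c d. \<phi> (u + v) (c * d) = m (\<phi> u c) (\<phi> v d)"
  shows "word_extend \<phi> (f * g) = m (word_extend \<phi> f) (word_extend \<phi> g)"
proof (induction f rule: poly_mapping_single_induct)
  case (single u c)
  show ?case
    by (induction g rule: poly_mapping_single_induct)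
      (simp_all add: assms mult_single distrib_left word_extend_add)
qed (simp_all add: assms distrib_right word_extend_add)

end

section \<open>Evaluation on $2\times 2$ matrices\<close>

lemma m2_mult_nth: "((A :: 'a::comm_ring_1 m2) ** B) $ i $ j = A$i$1 * B$1$j + A$i$2 * B$2$j"
  by (simp add: matrix_matrix_mult_def sum_2)

lemma smat_nth [simp]: "smat c M $ i $ j = c * M $ i $ j"
  by (simp add: smat_def)

lemma smat_mult: "smat c A ** smat d B = smat (c * d) ((A :: 'a::comm_ring_1 m2) ** B)"
  by (simp add: vec_eq_iff m2_mult_nth algebra_simps)

lemma matrix_add_rdistrib: "(A + B) ** C = A ** C + B ** (C :: 'a::semiring_1^'n^'m)"
  by (simp add: vec_eq_iff matrix_matrix_mult_def sum.distrib [symmetric] algebra_simps)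

lemma matrix_mul_lzero: "0 ** A = (0 :: 'a::semiring_1^'n^'m)"
  by (simp add: vec_eq_iff matrix_matrix_mult_def)

lemma matrix_mul_rzero: "A ** 0 = (0 :: 'a::semiring_1^'n^'m)"
  by (simp add: vec_eq_iff matrix_matrix_mult_def)

lemma smat_eq_mat_mult: "smat c M = mat c ** (M :: 'a::comm_ring_1 m2)"
  by (simp add: vec_eq_iff forall_2 m2_mult_nth mat_def)

lemma word_eval_Nil: "word_eval \<sigma> (Word []) = (mat 1 :: 'a::comm_ring_1 m2)"
  by (simp add: word_eval_def)

lemma word_eval_Cons:
  "word_eval \<sigma> (Word (v # l)) = \<sigma> v ** (word_eval \<sigma> (Word l) :: 'a::comm_ring_1 m2)"
  by (simp add: word_eval_def)

lemma word_eval_plus: "word_eval \<sigma> (u + v) = word_eval \<sigma> u ** (word_eval \<sigma> v :: 'a::comm_ring_1 m2)"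
proof -
  have foldr_mult: "foldr (\<lambda>v M. \<sigma> v ** M) l N = foldr (\<lambda>v M. \<sigma> v ** M) l (mat 1) ** (N :: 'a m2)"
    for l N by (induction l) (simp_all add: matrix_mul_assoc)
  show ?thesis
    unfolding word_eval_def plus_word_def word.sel foldr_append o_def
    by (rule foldr_mult)
qed

interpretation eval_linear: word_linear "\<lambda>w c. smat c (word_eval \<sigma> w)"
  for \<sigma> :: "var \<Rightarrow> 'a::comm_ring_1 m2"
  by unfold_locales (simp_all add: smat_def vec_eq_iff distrib_right)

lemma eval_eq_word_extend: "eval \<sigma> = word_extend (\<lambda>w c. smat c (word_eval \<sigma> w))"
  by (simp add: fun_eq_iff eval_def word_extend_def)

lemma eval_add: "eval \<sigma> (f + g) = eval \<sigma> f + eval \<sigma> (g :: 'a::comm_ring_1 ncpoly)"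
  by (simp add: eval_eq_word_extend eval_linear.word_extend_add)

lemma eval_mult: "eval \<sigma> (f * g) = eval \<sigma> f ** eval \<sigma> (g :: 'a::comm_ring_1 ncpoly)"
  unfolding eval_eq_word_extend
  by (rule eval_linear.word_extend_mult)
    (simp_all only: matrix_add_ldistrib matrix_add_rdistrib matrix_mul_lzero matrix_mul_rzero
      smat_mult word_eval_plus)

lemma eval_single:
  "eval \<sigma> (Poly_Mapping.single w c :: 'a::comm_ring_1 ncpoly) = smat c (word_eval \<sigma> w)"
  by (simp add: eval_eq_word_extend)

lemma eval_mon: "eval \<sigma> (mon l :: 'a::comm_ring_1 ncpoly) = word_eval \<sigma> (Word l)"
  by (simp add: mon_def eval_single vec_eq_iff)

lemma eval_var [simp]: "eval \<sigma> (var v :: 'a::comm_ring_1 ncpoly) = \<sigma> v"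
  using eval_mon [of \<sigma> "[v]"] by (simp add: mon_def var_def word_eval_Cons word_eval_Nil)

lemma eval_one [simp]: "eval \<sigma> (1 :: 'a::comm_ring_1 ncpoly) = mat 1"
  using eval_mon [of \<sigma> "[]"] by (simp add: mon_Nil word_eval_Nil)

lemma eval_zero [simp]: "eval \<sigma> (0 :: 'a::comm_ring_1 ncpoly) = 0"
  by (simp add: eval_def)

lemma eval_const_mult: "eval \<sigma> (const c * f) = smat c (eval \<sigma> (f :: 'a::comm_ring_1 ncpoly))"
proof -
  have "eval \<sigma> (const c :: 'a ncpoly) = mat c"
    by (simp add: const_def eval_single zero_word_def word_eval_Nil smat_eq_mat_mult)
  then show ?thesis
    by (simp add: eval_mult smat_eq_mat_mult)
qed

lemma eval_diff: "eval \<sigma> (f - g) = eval \<sigma> f - eval \<sigma> (g :: 'a::comm_ring_1 ncpoly)"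
  by (metis add_diff_cancel eval_add diff_add_cancel)

lemma eval_sum: "eval \<sigma> (\<Sum>x\<in>A. F x) = (\<Sum>x\<in>A. eval \<sigma> (F x :: 'a::comm_ring_1 ncpoly))"
  by (induction A rule: infinite_finite_induct) (simp_all add: eval_add)

lemma eval_comm:
  "eval \<sigma> (comm f g) = eval \<sigma> f ** eval \<sigma> g - eval \<sigma> g ** eval \<sigma> (f :: 'a::comm_ring_1 ncpoly)"
  by (simp add: comm_def eval_diff eval_mult)

lemma alg_endo_zero: "alg_endo h \<Longrightarrow> h 0 = 0"
  unfolding alg_endo_def by (metis add_cancel_right_right)

lemma eval_alg_endo:
  assumes "alg_endo h"
  shows "eval \<sigma> (h f) = eval (\<lambda>v. eval \<sigma> (h (var v))) (f :: 'a::comm_ring_1 ncpoly)"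
proof -
  from assms have h_add: "h (f + g) = h f + h g" and h_mult: "h (f * g) = h f * h g"
    and h_one: "h 1 = 1" and h_const: "h (const c * f) = const c * h f" for f g c
    unfolding alg_endo_def by blast+
  have h_mon: "eval \<sigma> (h (mon l)) = word_eval (\<lambda>v. eval \<sigma> (h (var v))) (Word l)" for l
    by (induction l)
      (simp_all add: h_one h_mult mon_Nil mon_Cons word_eval_Nil word_eval_Cons eval_mult)
  show ?thesis
  proof (induction f rule: poly_mapping_single_induct)
    case (single w c)
    show ?case
      by (simp only: single_eq_const_mon h_const eval_const_mult h_mon eval_mon)
  qed (simp_all add: h_add alg_endo_zero [OF assms] eval_add)
qed

section \<open>The identities of $(M_2(D), sl_2(D))$\<close>

definition sl2_subst :: "(var \<Rightarrow> 'a::comm_ring_1 m2) \<Rightarrow> bool" where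
  "sl2_subst \<sigma> \<longleftrightarrow> (\<forall>i. \<sigma> (Yv i) \<in> sl2_even) \<and> (\<forall>i. \<sigma> (Zv i) \<in> sl2_odd)"

lemma Id_M2_sl2_iff: "f \<in> Id_M2_sl2 \<longleftrightarrow> (\<forall>\<sigma>. sl2_subst \<sigma> \<longrightarrow> eval \<sigma> f = 0)"
  by (simp add: Id_M2_sl2_def sl2_subst_def)

definition m2_part :: "bool \<Rightarrow> 'a::comm_ring_1 m2 set" where
  "m2_part p = {M. if p then M$1$1 = 0 \<and> M$2$2 = 0 else M$1$2 = 0 \<and> M$2$1 = 0}"

lemma m2_part_mult: "A \<in> m2_part p \<Longrightarrow> B \<in> m2_part q \<Longrightarrow> A ** B \<in> m2_part (p \<noteq> q)"
  by (cases p; cases q) (simp_all add: m2_part_def m2_mult_nth)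

lemma m2_part_sum:
  "(\<And>x. x \<in> A \<Longrightarrow> M x \<in> m2_part p) \<Longrightarrow> (\<Sum>x\<in>A. M x) \<in> m2_part p"
  by (induction A rule: infinite_finite_induct) (auto simp: m2_part_def)

lemma m2_part_smat: "M \<in> m2_part p \<Longrightarrow> smat c M \<in> m2_part p"
  by (simp add: m2_part_def)

lemma sl2_odd_eq_m2_part: "sl2_odd = m2_part True"
  by (simp add: sl2_odd_def m2_part_def)

lemma trace_m2: "trace (M :: 'a::comm_ring_1 m2) = M$1$1 + M$2$2"
  by (simp add: trace_def sum_2)

lemma sl2_even_iff: "M \<in> sl2_even \<longleftrightarrow> M \<in> m2_part False \<and> trace M = 0"
  by (auto simp: sl2_even_def m2_part_def trace_m2)

lemma word_eval_m2_part:
  assumes "sl2_subst \<sigma>"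
  shows "word_eval \<sigma> w \<in> m2_part (odd (z_count w))"
proof -
  have "word_eval \<sigma> (Word l) \<in> m2_part (odd (z_count (Word l)))" for l
  proof (induction l)
    case Nil
    show ?case by (simp add: word_eval_Nil z_count_def m2_part_def mat_def)
  next
    case (Cons v l)
    have "\<sigma> v \<in> m2_part (case v of Zv _ \<Rightarrow> True | Yv _ \<Rightarrow> False)"
      using assms by (cases v) (auto simp: sl2_subst_def sl2_even_iff sl2_odd_eq_m2_part)
    from m2_part_mult [OF this Cons.IH] show ?case
      by (cases v) (simp_all add: word_eval_Cons z_count_def)
  qed
  then show ?thesis by (cases w) simp
qed

lemma eval_homog_m2_part:
  assumes "sl2_subst \<sigma>" and "f \<in> homog p"
  shows "eval \<sigma> f \<in> m2_part p"
  unfolding eval_def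
proof (intro m2_part_sum m2_part_smat)
  fix w assume "w \<in> Poly_Mapping.keys f"
  with assms show "word_eval \<sigma> w \<in> m2_part p"
    using word_eval_m2_part [OF assms(1), of w] by (simp add: homog_def)
qed

lemma trace_eval_lie_alg:
  assumes "sl2_subst \<sigma>" and "f \<in> lie_alg"
  shows "trace (eval \<sigma> f) = 0"
  using assms(2)
proof (induction f rule: lie_alg.induct)
  case (gen v)
  with assms(1) show ?case
    by (cases v) (auto simp: sl2_subst_def sl2_even_def sl2_odd_def trace_m2)
next
  case (add f g)
  then show ?case by (simp add: eval_add trace_add)
next
  case (smult f c)
  then show ?case by (simp add: eval_const_mult trace_m2 flip: distrib_left)
next
  case (bracket f g)
  show ?case by (simp add: eval_comm trace_sub trace_mul_sym [of "eval \<sigma> f"])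
qed (simp add: trace_0 [unfolded mat_0])

lemma sl2_subst_graded_endo:
  assumes "sl2_subst \<sigma>" and "graded_endo h"
  shows "sl2_subst (\<lambda>v. eval \<sigma> (h (var v)))"
  using assms trace_eval_lie_alg [OF assms(1)] eval_homog_m2_part [OF assms(1)]
  by (auto simp: sl2_subst_def graded_endo_def lie_part_def sl2_even_iff sl2_odd_eq_m2_part)

lemma Id_M2_sl2_graded_endo:
  assumes "graded_endo h" and "f \<in> Id_M2_sl2"
  shows "h f \<in> Id_M2_sl2"
proof -
  have "eval \<sigma> (h f) = 0" if "sl2_subst \<sigma>" for \<sigma>
  proof -
    have "alg_endo h"
      using assms(1) by (simp add: graded_endo_def)
    moreover have "eval (\<lambda>v. eval \<sigma> (h (var v))) f = 0"
      using assms sl2_subst_graded_endo [OF that assms(1)] by (simp add: Id_M2_sl2_iff)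
    ultimately show ?thesis
      by (simp only: eval_alg_endo [of h \<sigma> f])
  qed
  then show ?thesis by (simp add: Id_M2_sl2_iff)
qed

lemma Id_M2_sl2_wg_ideal: "wg_ideal (Id_M2_sl2 :: 'a::comm_ring_1 ncpoly set)"
proof -
  have "two_sided_ideal (Id_M2_sl2 :: 'a ncpoly set)"
    by (auto simp: two_sided_ideal_def Id_M2_sl2_iff eval_add eval_mult)
  with Id_M2_sl2_graded_endo show ?thesis
    by (auto simp: wg_ideal_def)
qed

lemma relations_in_Id_M2_sl2:
  "{comm (yv 1) (yv 2), zv 1 * zv 2 * zv 3 - zv 3 * zv 2 * zv 1, yv 1 * zv 1 + zv 1 * yv 1}
    \<subseteq> (Id_M2_sl2 :: 'a::comm_ring_1 ncpoly set)"
proof -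
  have "eval \<sigma> (comm (yv 1) (yv 2) :: 'a ncpoly) = 0"
    and "eval \<sigma> (zv 1 * zv 2 * zv 3 - zv 3 * zv 2 * zv 1 :: 'a ncpoly) = 0"
    and "eval \<sigma> (yv 1 * zv 1 + zv 1 * yv 1 :: 'a ncpoly) = 0"
    if "sl2_subst \<sigma>" for \<sigma>
  proof -
    from that have "\<sigma> (Yv i) $ 1 $ 2 = 0" "\<sigma> (Yv i) $ 2 $ 1 = 0"
      "\<sigma> (Yv i) $ 2 $ 2 = - \<sigma> (Yv i) $ 1 $ 1" "\<sigma> (Zv i) $ 1 $ 1 = 0" "\<sigma> (Zv i) $ 2 $ 2 = 0" for i
      by (auto simp: sl2_subst_def sl2_even_def sl2_odd_def eq_neg_iff_add_eq_0 add.commute)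
    then show "eval \<sigma> (comm (yv 1) (yv 2) :: 'a ncpoly) = 0"
      and "eval \<sigma> (zv 1 * zv 2 * zv 3 - zv 3 * zv 2 * zv 1 :: 'a ncpoly) = 0"
      and "eval \<sigma> (yv 1 * zv 1 + zv 1 * yv 1 :: 'a ncpoly) = 0"
      by (simp_all add: eval_comm eval_mult eval_add eval_diff vec_eq_iff forall_2 m2_mult_nth
          algebra_simps)
  qed
  then show ?thesis by (auto simp: Id_M2_sl2_iff)
qed

lemma wg_ideal_gen_least: "wg_ideal J \<Longrightarrow> S \<subseteq> J \<Longrightarrow> wg_ideal_gen S \<subseteq> J"
  by (auto simp: wg_ideal_gen_def)

lemma wg_ideal_gen_superset: "S \<subseteq> wg_ideal_gen S"
  by (auto simp: wg_ideal_gen_def)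

lemma wg_ideal_wg_ideal_gen: "wg_ideal (wg_ideal_gen S)"
  unfolding wg_ideal_gen_def wg_ideal_def two_sided_ideal_def by blast

definition rename_vars :: "(var \<Rightarrow> var) \<Rightarrow> 'a::comm_ring_1 ncpoly \<Rightarrow> 'a ncpoly" where
  "rename_vars \<rho> = word_extend (\<lambda>w. Poly_Mapping.single (Word (map \<rho> (word_letters w))))"

interpretation rename_linear: word_linear "\<lambda>w. Poly_Mapping.single (Word (map \<rho> (word_letters w)))"
  for \<rho> :: "var \<Rightarrow> var"
  by unfold_locales (simp_all add: single_add)

lemma rename_vars_single:
  "rename_vars \<rho> (Poly_Mapping.single w c) = Poly_Mapping.single (Word (map \<rho> (word_letters w))) c"
  by (simp add: rename_vars_def)

lemma rename_vars_var: "rename_vars \<rho> (var v) = var (\<rho> v)"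
  by (simp add: var_def rename_vars_single)

lemma rename_vars_add: "rename_vars \<rho> (f + g) = rename_vars \<rho> f + rename_vars \<rho> g"
  by (simp add: rename_vars_def rename_linear.word_extend_add)

lemma rename_vars_mult: "rename_vars \<rho> (f * g) = rename_vars \<rho> f * rename_vars \<rho> g"
  unfolding rename_vars_def
  by (rule rename_linear.word_extend_mult) (simp_all add: algebra_simps mult_single plus_word_def)

lemma rename_vars_diff: "rename_vars \<rho> (f - g) = rename_vars \<rho> f - rename_vars \<rho> g"
  by (metis add_diff_cancel rename_vars_add diff_add_cancel)

lemma alg_endo_rename_vars: "alg_endo (rename_vars \<rho>)"
  by (simp add: alg_endo_def rename_vars_add rename_vars_mult rename_vars_single const_def
      zero_word_def flip: single_one)

definition rename_yz :: "(nat \<Rightarrow> nat) \<Rightarrow> (nat \<Rightarrow> nat) \<Rightarrow> var \<Rightarrow> var" where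
  "rename_yz fy fz v = (case v of Yv i \<Rightarrow> Yv (fy i) | Zv i \<Rightarrow> Zv (fz i))"

lemma var_lie_part:
  "yv i \<in> (lie_part False :: 'a::comm_ring_1 ncpoly set)"
  "zv i \<in> (lie_part True :: 'a::comm_ring_1 ncpoly set)"
  by (simp_all add: lie_part_def lie_alg.gen) (simp_all add: homog_def var_def z_count_def)

lemma graded_endo_rename_yz: "graded_endo (rename_vars (rename_yz fy fz))"
  by (simp add: graded_endo_def alg_endo_rename_vars rename_vars_var rename_yz_def var_lie_part)

definition cong_mod :: "'a::comm_ring_1 ncpoly set \<Rightarrow> 'a ncpoly \<Rightarrow> 'a ncpoly \<Rightarrow> bool" where
  "cong_mod J f g \<longleftrightarrow> f - g \<in> J"

locale ncpoly_ideal =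
  fixes J :: "'a::comm_ring_1 ncpoly set"
  assumes two_sided: "two_sided_ideal J"
begin

lemma cong_mod_refl: "cong_mod J f f"
  using two_sided by (simp add: cong_mod_def two_sided_ideal_def)

lemma cong_mod_trans [trans]: "cong_mod J f g \<Longrightarrow> cong_mod J g h \<Longrightarrow> cong_mod J f h"
proof -
  assume "cong_mod J f g" "cong_mod J g h"
  then have "(f - g) + (g - h) \<in> J"
    using two_sided unfolding cong_mod_def two_sided_ideal_def by blast
  then show ?thesis by (simp add: cong_mod_def)
qed

lemma cong_mod_mult: "cong_mod J f g \<Longrightarrow> cong_mod J (a * f * b) (a * g * b)"
  using two_sided unfolding cong_mod_def two_sided_ideal_def
  by (metis left_diff_distrib right_diff_distrib)

lemma cong_mod_mult_left: "cong_mod J f g \<Longrightarrow> cong_mod J (a * f) (a * g)"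
  using cong_mod_mult [of f g a 1] by simp

lemma cong_mod_uminus: "cong_mod J f g \<Longrightarrow> cong_mod J (- f) (- g)"
  using cong_mod_mult_left [of f g "- 1"] by simp

lemma mult_right_mem: "f \<in> J \<Longrightarrow> f * b \<in> J"
  using two_sided unfolding two_sided_ideal_def by (metis mult_1)

lemma cong_mod_sum:
  "(\<And>x. x \<in> A \<Longrightarrow> cong_mod J (F x) (G x)) \<Longrightarrow> cong_mod J (\<Sum>x\<in>A. F x) (\<Sum>x\<in>A. G x)"
proof (induction A rule: infinite_finite_induct)
  case (insert x A)
  then show ?case
    using two_sided by (simp add: cong_mod_def two_sided_ideal_def add_diff_add)
qed (simp_all add: cong_mod_refl)

end

locale sl2_relations =
  fixes J :: "'a::comm_ring_1 ncpoly set"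
  assumes wg_ideal: "wg_ideal J"
    and relations: "{comm (yv 1) (yv 2), zv 1 * zv 2 * zv 3 - zv 3 * zv 2 * zv 1,
                     yv 1 * zv 1 + zv 1 * yv 1} \<subseteq> J"
begin

sublocale ncpoly_ideal
  using wg_ideal by unfold_locales (simp add: wg_ideal_def)

lemma rename_yz_mem: "f \<in> J \<Longrightarrow> rename_vars (rename_yz fy fz) f \<in> J"
  using wg_ideal graded_endo_rename_yz unfolding wg_ideal_def by blast

lemma comm_yv_mem: "comm (yv i) (yv j) \<in> J"
  using rename_yz_mem [of "comm (yv 1) (yv 2)" "id(1 := i, 2 := j)"] relations
  by (simp add: comm_def rename_vars_diff rename_vars_mult rename_vars_var rename_yz_def)

lemma zv_triple_mem: "zv a * zv b * zv c - zv c * zv b * zv a \<in> J"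
  using rename_yz_mem [of "zv 1 * zv 2 * zv 3 - zv 3 * zv 2 * zv 1" id "id(1 := a, 2 := b, 3 := c)"]
    relations
  by (simp add: rename_vars_diff rename_vars_mult rename_vars_var rename_yz_def)

lemma yv_zv_anticomm_mem: "yv i * zv j + zv j * yv i \<in> J"
  using rename_yz_mem [of "yv 1 * zv 1 + zv 1 * yv 1" "id(1 := i)" "id(1 := j)"] relations
  by (simp add: rename_vars_add rename_vars_mult rename_vars_var rename_yz_def)

lemma mon_zy_anticomm: "cong_mod J (mon (Zv j # Yv i # X)) (- mon (Yv i # Zv j # X))"
proof -
  have "(yv i * zv j + zv j * yv i) * mon X \<in> J"
    by (rule mult_right_mem [OF yv_zv_anticomm_mem])
  then show ?thesis
    by (simp add: cong_mod_def mon_Cons distrib_right mult.assoc add.commute)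
qed

lemma mon_yy_comm: "cong_mod J (mon (Yv a # Yv b # X)) (mon (Yv b # Yv a # X))"
proof -
  have "comm (yv a) (yv b) * mon X \<in> J"
    by (rule mult_right_mem [OF comm_yv_mem])
  then show ?thesis
    by (simp add: cong_mod_def mon_Cons comm_def left_diff_distrib mult.assoc)
qed

lemma mon_zzz_reverse: "cong_mod J (mon (Zv a # Zv e # Zv b # X)) (mon (Zv b # Zv e # Zv a # X))"
proof -
  have "(zv a * zv e * zv b - zv b * zv e * zv a) * mon X \<in> J"
    by (rule mult_right_mem [OF zv_triple_mem])
  then show ?thesis
    by (simp add: cong_mod_def mon_Cons left_diff_distrib mult.assoc)
qed

end

section \<open>A normal form for monomials\<close>

function interleave :: "'a list \<Rightarrow> 'a list \<Rightarrow> 'a list" where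
  "interleave [] ys = ys"
| "interleave (x # xs) ys = x # interleave ys xs"
  by pat_completeness auto
termination by (relation "Wellfounded.measure (\<lambda>(xs, ys). length xs + length ys)") auto

fun odds :: "'a list \<Rightarrow> 'a list" and evens :: "'a list \<Rightarrow> 'a list" where
  "odds [] = []"
| "odds (x # xs) = x # evens xs"
| "evens [] = []"
| "evens (x # xs) = odds xs"

lemma interleave_odds_evens: "interleave (odds l) (evens l) = l"
  and length_evens_le_odds: "length (evens l) \<le> length (odds l)"
  and length_odds_le_evens: "length (odds l) \<le> Suc (length (evens l))"
  by (induction l) auto

definition y_indices :: "var list \<Rightarrow> nat list" where
  "y_indices l = concat (map (\<lambda>v. case v of Yv i \<Rightarrow> [i] | Zv _ \<Rightarrow> []) l)"

definition z_indices :: "var list \<Rightarrow> nat list" where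
  "z_indices l = concat (map (\<lambda>v. case v of Zv i \<Rightarrow> [i] | Yv _ \<Rightarrow> []) l)"

lemma y_indices_simps [simp]:
  "y_indices [] = []" "y_indices (Yv i # l) = i # y_indices l" "y_indices (Zv i # l) = y_indices l"
  by (simp_all add: y_indices_def)

lemma z_indices_simps [simp]:
  "z_indices [] = []" "z_indices (Yv i # l) = z_indices l" "z_indices (Zv i # l) = i # z_indices l"
  by (simp_all add: z_indices_def)

text \<open>The data that survive the relations: the multiset of indices of the \<open>y\<close>'s, and the multisets
  of indices of the \<open>z\<close>'s in odd and in even position among the \<open>z\<close>'s.\<close>

type_synonym yz_content = "nat multiset \<times> nat multiset \<times> nat multiset"

definition content :: "var list \<Rightarrow> yz_content" where
  "content l = (mset (y_indices l), mset (odds (z_indices l)), mset (evens (z_indices l)))"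

fun z_balanced :: "yz_content \<Rightarrow> bool" where
  "z_balanced (_, Od, Ev) \<longleftrightarrow> size Ev \<le> size Od \<and> size Od \<le> size Ev + 1"

fun canonical :: "yz_content \<Rightarrow> var list" where
  "canonical (Y, Od, Ev) = map Yv (sorted_list_of_multiset Y)
     @ map Zv (interleave (sorted_list_of_multiset Od) (sorted_list_of_multiset Ev))"

lemma z_balanced_content: "z_balanced (content l)"
  by (simp add: content_def length_evens_le_odds length_odds_le_evens)

context sl2_relations
begin

lemma mon_move_z:
  "cong_mod J (mon (Zv j # map Yv ys @ X)) (const ((-1) ^ length ys) * mon (map Yv ys @ Zv j # X))"
proof (induction ys arbitrary: X)
  case Nil
  show ?case by (simp add: cong_mod_refl)
next
  case (Cons i ys)
  have "cong_mod J (mon (Zv j # Yv i # map Yv ys @ X)) (- (yv i * mon (Zv j # map Yv ys @ X)))"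
    using mon_zy_anticomm by (simp add: mon_Cons)
  also have "cong_mod J \<dots> (- (yv i * (const ((-1) ^ length ys) * mon (map Yv ys @ Zv j # X))))"
    by (intro cong_mod_uminus cong_mod_mult_left Cons.IH)
  also have "\<dots> = const ((-1) ^ length (i # ys)) * mon (map Yv (i # ys) @ Zv j # X)"
    by (simp add: mult_const_left_commute mon_Cons const_uminus)
  finally show ?case by simp
qed

lemma mon_separate_yz:
  "\<exists>s. cong_mod J (mon l) (const s * mon (map Yv (y_indices l) @ map Zv (z_indices l)))"
proof (induction l)
  case Nil
  show ?case by (rule exI [of _ 1]) (simp add: cong_mod_refl)
next
  case (Cons v l)
  let ?Y = "map Yv (y_indices l)" and ?Z = "map Zv (z_indices l)"
  obtain s where s: "cong_mod J (mon l) (const s * mon (?Y @ ?Z))"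
    using Cons.IH by blast
  then have vs: "cong_mod J (mon (v # l)) (const s * mon (v # ?Y @ ?Z))"
    using cong_mod_mult_left [OF s, of "var v"] by (simp add: mult_const_left_commute mon_Cons)
  show ?case
  proof (cases v)
    case (Yv i)
    with vs show ?thesis by auto
  next
    case (Zv j)
    note vs
    also have "cong_mod J (const s * mon (v # ?Y @ ?Z))
        (const s * (const ((-1) ^ length (y_indices l)) * mon (?Y @ Zv j # ?Z)))"
      unfolding Zv by (intro cong_mod_mult_left mon_move_z)
    finally show ?thesis
      using Zv by (intro exI [of _ "s * (-1) ^ length (y_indices l)"])
        (simp add: const_mult mult.assoc)
  qed
qed

lemma mon_insort_y: "cong_mod J (mon (Yv a # map Yv l @ X)) (mon (map Yv (insort a l) @ X))"
proof (induction l arbitrary: X)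
  case Nil
  show ?case by (simp add: cong_mod_refl)
next
  case (Cons b l)
  show ?case
  proof (cases "a \<le> b")
    case True
    then show ?thesis by (simp add: cong_mod_refl)
  next
    case False
    have "cong_mod J (mon (Yv a # Yv b # map Yv l @ X)) (mon (Yv b # Yv a # map Yv l @ X))"
      by (rule mon_yy_comm)
    also have "cong_mod J \<dots> (mon (Yv b # map Yv (insort a l) @ X))"
      unfolding mon_Cons [of "Yv b"] by (intro cong_mod_mult_left) (simp add: Cons.IH)
    finally show ?thesis using False by simp
  qed
qed

lemma mon_sort_y: "cong_mod J (mon (map Yv ys @ X)) (mon (map Yv (sort ys) @ X))"
proof (induction ys arbitrary: X)
  case Nil
  show ?case by (simp add: cong_mod_refl)
next
  case (Cons a ys)
  have "cong_mod J (mon (map Yv (a # ys) @ X)) (mon (Yv a # map Yv (sort ys) @ X))"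
    using cong_mod_mult_left [OF Cons.IH [of X], of "yv a"] by (simp add: mon_Cons)
  also have "cong_mod J \<dots> (mon (map Yv (sort (a # ys)) @ X))"
    using mon_insort_y by simp
  finally show ?case .
qed

lemma mon_insort_z:
  "length l \<le> length es \<Longrightarrow>
    cong_mod J (mon (map Zv (interleave (a # l) es))) (mon (map Zv (interleave (insort a l) es)))"
proof (induction l arbitrary: a es)
  case Nil
  show ?case by (simp add: cong_mod_refl)
next
  case (Cons b l)
  show ?case
  proof (cases "a \<le> b")
    case True
    then show ?thesis by (simp add: cong_mod_refl)
  next
    case False
    from Cons.prems obtain e es' where es: "es = e # es'" and len: "length l \<le> length es'"
      by (cases es) auto
    have "cong_mod J (mon (map Zv (interleave (a # b # l) es)))
        (mon (Zv b # Zv e # map Zv (interleave (a # l) es')))"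
      using mon_zzz_reverse [of a e b "map Zv (interleave es' l)"] by (simp add: es)
    also have "cong_mod J \<dots> (mon (Zv b # Zv e # map Zv (interleave (insort a l) es')))"
      unfolding mon_Cons by (intro cong_mod_mult_left Cons.IH len)
    finally show ?thesis using False es by simp
  qed
qed

lemma mon_sort_z_odd:
  "length xs \<le> length es + 1 \<Longrightarrow>
    cong_mod J (mon (map Zv (interleave xs es))) (mon (map Zv (interleave (sort xs) es)))"
proof (induction xs arbitrary: es)
  case Nil
  show ?case by (simp add: cong_mod_refl)
next
  case (Cons a xs)
  show ?case
  proof (cases es)
    case Nil
    with Cons.prems show ?thesis by (simp add: cong_mod_refl)
  next
    case (Cons e es')
    have "cong_mod J (mon (map Zv (interleave (a # xs) es)))
        (mon (map Zv (interleave (a # sort xs) es)))"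
      using cong_mod_mult_left [OF Cons.IH [of es'], of "zv a * zv e"] Cons.prems
      by (simp add: Cons mon_Cons mult.assoc)
    also have "cong_mod J \<dots> (mon (map Zv (interleave (insort a (sort xs)) es)))"
      using Cons.prems by (intro mon_insort_z) simp
    finally show ?thesis by simp
  qed
qed

lemma mon_sort_z:
  assumes "length es \<le> length os" and "length os \<le> length es + 1"
  shows "cong_mod J (mon (map Zv (interleave os es)))
    (mon (map Zv (interleave (sort os) (sort es))))"
proof -
  have "cong_mod J (mon (map Zv (interleave os es))) (mon (map Zv (interleave os (sort es))))"
  proof (cases os)
    case Nil
    with assms show ?thesis by (simp add: cong_mod_refl)
  next
    case (Cons x os')
    show ?thesis
      using cong_mod_mult_left [OF mon_sort_z_odd [of es os'], of "zv x"] assms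
      by (simp add: Cons mon_Cons)
  qed
  also have "cong_mod J \<dots> (mon (map Zv (interleave (sort os) (sort es))))"
    using assms by (intro mon_sort_z_odd) simp
  finally show ?thesis .
qed

lemma mon_canonical: "\<exists>s. cong_mod J (mon l) (const s * mon (canonical (content l)))"
proof -
  let ?y = "y_indices l" and ?z = "z_indices l"
  obtain s where "cong_mod J (mon l) (const s * mon (map Yv ?y @ map Zv ?z))"
    using mon_separate_yz by blast
  also have "cong_mod J \<dots>
      (const s * mon (map Yv (sort ?y) @ map Zv (interleave (odds ?z) (evens ?z))))"
    unfolding interleave_odds_evens by (intro cong_mod_mult_left mon_sort_y)
  also have "cong_mod J \<dots> (const s * (mon (map Yv (sort ?y))
      * mon (map Zv (interleave (sort (odds ?z)) (sort (evens ?z))))))"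
    unfolding mon_append
    by (intro cong_mod_mult_left mon_sort_z length_evens_le_odds) (simp add: length_odds_le_evens)
  also have "\<dots> = const s * mon (canonical (content l))"
    by (simp add: content_def mon_append)
  finally show ?thesis ..
qed

lemma cong_canonical_combination:
  "\<exists>K d. finite K \<and> (\<forall>\<kappa>\<in>K. z_balanced \<kappa>)
     \<and> cong_mod J f (\<Sum>\<kappa>\<in>K. const (d \<kappa>) * mon (canonical \<kappa>))"
proof -
  obtain s where s: "\<And>l. cong_mod J (mon l) (const (s l) * mon (canonical (content l)))"
    using mon_canonical by metis
  define C where "C w = content (word_letters w)" for w
  define c where "c w = Poly_Mapping.lookup f w * s (word_letters w)" for w
  let ?K = "C ` Poly_Mapping.keys f"
  define d where "d \<kappa> = (\<Sum>w\<in>{w\<in>Poly_Mapping.keys f. C w = \<kappa>}. c w)" for \<kappa>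
  have "cong_mod J (const (Poly_Mapping.lookup f w) * mon (word_letters w))
      (const (c w) * mon (canonical (C w)))" for w
    using cong_mod_mult_left [OF s] by (simp add: c_def C_def const_mult mult.assoc)
  then have "cong_mod J f (\<Sum>w\<in>Poly_Mapping.keys f. const (c w) * mon (canonical (C w)))"
    by (subst ncpoly_eq_sum_mon) (rule cong_mod_sum)
  also have "(\<Sum>w\<in>Poly_Mapping.keys f. const (c w) * mon (canonical (C w)))
      = (\<Sum>\<kappa>\<in>?K. const (d \<kappa>) * mon (canonical \<kappa>))"
    by (subst sum.image_gen [OF finite_keys, where g = C])
      (auto simp: d_def const_sum sum_distrib_right intro!: sum.cong)
  finally show ?thesis
    by (intro exI conjI) (auto simp: C_def z_balanced_content)
qed

end

section \<open>Linear independence of the normal forms\<close>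

lemma poly_fun_eq_0_slice:
  fixes d :: "'b multiset \<Rightarrow> 'a::idom"
  assumes "infinite (UNIV :: 'a set)" and "finite K"
    and "\<And>x. (\<Sum>m\<in>K. d m * (\<Prod>i\<in>#m. x i)) = 0"
  shows "(\<Sum>m\<in>{m\<in>K. count m v = k}. d m * (\<Prod>i\<in>#m. x i)) = 0"
proof -
  define p where "p = (\<Sum>m\<in>K. monom (d m * (\<Prod>i\<in>#m. x i)) (count m v))"
  have "poly p c = (\<Sum>m\<in>K. d m * (\<Prod>i\<in>#m. (x(v := c * x v)) i))" for c
  proof -
    have "(\<Prod>i\<in>#m. (x(v := c * x v)) i) = c ^ count m v * (\<Prod>i\<in>#m. x i)" for m
      by (induction m) (auto simp: algebra_simps)
    then show ?thesis
      by (simp add: p_def poly_sum poly_monom algebra_simps)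
  qed
  then have "p = 0"
    using assms poly_roots_finite [of p] by auto
  then have "coeff p k = 0" by simp
  moreover have "coeff p k = (\<Sum>m\<in>K. if count m v = k then d m * (\<Prod>i\<in>#m. x i) else 0)"
    by (simp add: p_def coeff_sum)
  ultimately show ?thesis
    by (simp add: sum.inter_filter [OF assms(2)])
qed

text \<open>A polynomial in commuting variables is given by its coefficients \<open>d\<close> on the multisets of
  variables.\<close>

lemma poly_fun_eq_0_imp_coeff_eq_0:
  fixes d :: "'b multiset \<Rightarrow> 'a::idom"
  assumes "infinite (UNIV :: 'a set)" and "finite K"
    and "\<And>x. (\<Sum>m\<in>K. d m * (\<Prod>i\<in>#m. x i)) = 0" and "m \<in> K"
  shows "d m = 0"
  using assms(2-)
proof (induction "card K" arbitrary: K rule: less_induct)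
  case less
  show ?case
  proof (cases "K = {m}")
    case True
    with less.prems(2) [of "\<lambda>_. 1"] show ?thesis by simp
  next
    case False
    then obtain m' where "m' \<in> K" "m' \<noteq> m"
      using less.prems(3) by blast
    then obtain v where v: "count m' v \<noteq> count m v"
      by (meson multiset_eqI)
    let ?K = "{m''\<in>K. count m'' v = count m v}"
    have "?K \<subset> K"
      using \<open>m' \<in> K\<close> v by blast
    then have "card ?K < card K"
      by (rule psubset_card_mono [OF less.prems(1)])
    moreover have "(\<Sum>m\<in>?K. d m * (\<Prod>i\<in>#m. x i)) = 0" for x
      using poly_fun_eq_0_slice [OF assms(1) less.prems(1,2)] .
    ultimately show ?thesis
      using less.hyps less.prems by simp
  qed
qed

text \<open>The values \<open>x (Inl i)\<close>, \<open>x (Inr (Inl i))\<close>, \<open>x (Inr (Inr i))\<close> play the roles of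
  \<open>t\<^sub>i\<close>, \<open>u\<^sub>i\<close>, \<open>v\<^sub>i\<close> in the generic substitution.\<close>

definition generic_subst :: "(nat + nat + nat \<Rightarrow> 'a::comm_ring_1) \<Rightarrow> var \<Rightarrow> 'a m2" where
  "generic_subst x v = (case v of
      Yv i \<Rightarrow> (\<chi> r c. if r = c then (if r = 1 then x (Inl i) else - x (Inl i)) else 0)
    | Zv i \<Rightarrow> (\<chi> r c. if r = c then 0 else if r = 1 then x (Inr (Inl i)) else x (Inr (Inr i))))"

lemma generic_subst_nth:
  "generic_subst x (Yv i) $ 1 $ 1 = x (Inl i)" "generic_subst x (Yv i) $ 1 $ 2 = 0"
  "generic_subst x (Yv i) $ 2 $ 1 = 0" "generic_subst x (Yv i) $ 2 $ 2 = - x (Inl i)"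
  "generic_subst x (Zv i) $ 1 $ 1 = 0" "generic_subst x (Zv i) $ 1 $ 2 = x (Inr (Inl i))"
  "generic_subst x (Zv i) $ 2 $ 1 = x (Inr (Inr i))" "generic_subst x (Zv i) $ 2 $ 2 = 0"
  by (simp_all add: generic_subst_def)

lemma sl2_subst_generic_subst: "sl2_subst (generic_subst x)"
  by (simp add: sl2_subst_def sl2_even_def sl2_odd_def generic_subst_nth)

definition first_row_sum :: "'a::comm_ring_1 m2 \<Rightarrow> 'a" where
  "first_row_sum M = M$1$1 + M$1$2"

lemma first_row_sum_sum: "first_row_sum (\<Sum>x\<in>A. M x) = (\<Sum>x\<in>A. first_row_sum (M x))"
  by (simp add: first_row_sum_def sum.distrib)

lemma first_row_sum_smat: "first_row_sum (smat c M) = c * first_row_sum M"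
  by (simp add: first_row_sum_def distrib_left)

lemma first_row_sum_generic_y_mult:
  "first_row_sum (generic_subst x (Yv i) ** M) = x (Inl i) * first_row_sum M"
  by (simp add: first_row_sum_def m2_mult_nth generic_subst_nth distrib_left)

lemma first_row_sum_generic_zz_mult:
  "first_row_sum (generic_subst x (Zv a) ** (generic_subst x (Zv e) ** M))
    = x (Inr (Inl a)) * x (Inr (Inr e)) * first_row_sum M"
  by (simp add: first_row_sum_def m2_mult_nth generic_subst_nth algebra_simps)

lemma first_row_sum_generic_y:
  "first_row_sum (word_eval (generic_subst x) (Word (map Yv ys @ X)))
    = (\<Prod>i\<leftarrow>ys. x (Inl i)) * first_row_sum (word_eval (generic_subst x) (Word X))"
  by (induction ys) (simp_all add: word_eval_Cons first_row_sum_generic_y_mult)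

lemma first_row_sum_generic_z:
  assumes "length es \<le> length os" and "length os \<le> length es + 1"
  shows "first_row_sum (word_eval (generic_subst x) (Word (map Zv (interleave os es))))
    = (\<Prod>i\<leftarrow>os. x (Inr (Inl i))) * (\<Prod>i\<leftarrow>es. x (Inr (Inr i)))"
  using assms
proof (induction os arbitrary: es)
  case Nil
  then show ?case by (simp add: first_row_sum_def word_eval_Nil mat_def)
next
  case (Cons a os)
  show ?case
  proof (cases es)
    case Nil
    with Cons.prems show ?thesis
      by (simp add: first_row_sum_def word_eval_Cons word_eval_Nil m2_mult_nth generic_subst_nth
          mat_def)
  next
    case (Cons e es')
    with Cons.prems Cons.IH [of es'] show ?thesis
      by (simp add: word_eval_Cons first_row_sum_generic_zz_mult)
  qed
qed

definition content_vars :: "yz_content \<Rightarrow> (nat + nat + nat) multiset" where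
  "content_vars \<kappa> = image_mset Inl (fst \<kappa>) + image_mset (Inr \<circ> Inl) (fst (snd \<kappa>))
     + image_mset (Inr \<circ> Inr) (snd (snd \<kappa>))"

lemma first_row_sum_generic_canonical:
  assumes "z_balanced \<kappa>"
  shows "first_row_sum (word_eval (generic_subst x) (Word (canonical \<kappa>)))
    = (\<Prod>i\<in>#content_vars \<kappa>. x i)"
proof -
  obtain Y Od Ev where \<kappa>: "\<kappa> = (Y, Od, Ev)"
    by (cases \<kappa>) auto
  have prod_sorted: "(\<Prod>i\<leftarrow>sorted_list_of_multiset M. f i) = (\<Prod>i\<in>#M. f i)"
    for f :: "nat \<Rightarrow> 'a" and M
    by (metis mset_map mset_sorted_list_of_multiset prod_mset_prod_list)
  have size: "length (sorted_list_of_multiset M) = size M" for M :: "nat multiset"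
    by (metis mset_sorted_list_of_multiset size_mset)
  show ?thesis
    using assms
    by (simp add: \<kappa> first_row_sum_generic_y first_row_sum_generic_z size prod_sorted
        content_vars_def multiset.map_comp o_def)
qed

lemma inj_content_vars: "inj content_vars"
proof (rule inj_on_inverseI [where g = "\<lambda>m. (image_mset projl (filter_mset isl m),
    image_mset (projl \<circ> projr) (filter_mset (\<lambda>v. \<not> isl v \<and> isl (projr v)) m),
    image_mset (projr \<circ> projr) (filter_mset (\<lambda>v. \<not> isl v \<and> \<not> isl (projr v)) m))"])
  fix \<kappa> :: yz_content
  show "(image_mset projl (filter_mset isl (content_vars \<kappa>)),
      image_mset (projl \<circ> projr) (filter_mset (\<lambda>v. \<not> isl v \<and> isl (projr v)) (content_vars \<kappa>)),
      image_mset (projr \<circ> projr) (filter_mset (\<lambda>v. \<not> isl v \<and> \<not> isl (projr v)) (content_vars \<kappa>)))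
    = \<kappa>"
    by (simp add: content_vars_def multiset.map_comp o_def prod_eq_iff
        flip: image_mset_filter_mset_swap)
qed

lemma canonical_combination_identity_coeff_eq_0:
  assumes "infinite (UNIV :: 'a::idom set)" and "finite K" and "\<forall>\<kappa>\<in>K. z_balanced \<kappa>"
    and "(\<Sum>\<kappa>\<in>K. const (d \<kappa>) * mon (canonical \<kappa>)) \<in> (Id_M2_sl2 :: 'a ncpoly set)"
    and "\<kappa> \<in> K"
  shows "d \<kappa> = 0"
proof -
  let ?g = "\<Sum>\<kappa>\<in>K. const (d \<kappa>) * mon (canonical \<kappa>)"
  let ?m = content_vars and ?d = "\<lambda>m. d (the_inv_into K content_vars m)"
  have inj: "inj_on ?m K"
    using inj_content_vars by (rule inj_on_subset) simp
  have "(\<Sum>m\<in>?m ` K. ?d m * (\<Prod>i\<in>#m. x i)) = 0" for x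
  proof -
    have "(\<Sum>m\<in>?m ` K. ?d m * (\<Prod>i\<in>#m. x i)) = (\<Sum>\<kappa>\<in>K. d \<kappa> * (\<Prod>i\<in>#?m \<kappa>. x i))"
      by (simp add: sum.reindex [OF inj] the_inv_into_f_f [OF inj])
    also have "\<dots> = first_row_sum (eval (generic_subst x) ?g)"
      using assms(3)
      by (simp add: eval_sum eval_const_mult eval_mon first_row_sum_generic_canonical
          first_row_sum_sum first_row_sum_smat)
    also have "eval (generic_subst x) ?g = 0"
      using assms(4) sl2_subst_generic_subst unfolding Id_M2_sl2_iff by blast
    finally show ?thesis
      by (simp add: first_row_sum_def)
  qed
  then have "?d (?m \<kappa>) = 0"
    by (rule poly_fun_eq_0_imp_coeff_eq_0
        [OF assms(1) finite_imageI [OF assms(2)] _ imageI [OF assms(5)]])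
  then show ?thesis
    by (simp add: the_inv_into_f_f [OF inj assms(5)])
qed

lemma Id_M2_sl2_subset_sl2_relations:
  assumes "infinite (UNIV :: 'a::idom set)" and "sl2_relations J" and "J \<subseteq> Id_M2_sl2"
  shows "(Id_M2_sl2 :: 'a ncpoly set) \<subseteq> J"
proof
  interpret sl2_relations J by (fact assms(2))
  fix f :: "'a ncpoly" assume f: "f \<in> Id_M2_sl2"
  obtain K d where K: "finite K" "\<forall>\<kappa>\<in>K. z_balanced \<kappa>"
    and cong: "cong_mod J f (\<Sum>\<kappa>\<in>K. const (d \<kappa>) * mon (canonical \<kappa>))"
    using cong_canonical_combination by blast
  with assms(3) have "f - (\<Sum>\<kappa>\<in>K. const (d \<kappa>) * mon (canonical \<kappa>)) \<in> Id_M2_sl2"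
    by (auto simp: cong_mod_def)
  with f have "(\<Sum>\<kappa>\<in>K. const (d \<kappa>) * mon (canonical \<kappa>)) \<in> Id_M2_sl2"
    by (auto simp: Id_M2_sl2_iff eval_diff)
  then have "\<forall>\<kappa>\<in>K. d \<kappa> = 0"
    using canonical_combination_identity_coeff_eq_0 [OF assms(1) K] by simp
  with cong show "f \<in> J"
    by (simp add: cong_mod_def)
qed

theorem mainTheorem5:
  assumes "infinite (UNIV :: 'a::idom set)"
  shows "(Id_M2_sl2 :: 'a ncpoly set) =
         wg_ideal_gen {comm (yv 1) (yv 2),
                       zv 1 * zv 2 * zv 3 - zv 3 * zv 2 * zv 1,
                       yv 1 * zv 1 + zv 1 * yv 1}"
  (is "_ = wg_ideal_gen ?R")
proof
  show gen_subset: "wg_ideal_gen ?R \<subseteq> Id_M2_sl2"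
    by (rule wg_ideal_gen_least [OF Id_M2_sl2_wg_ideal relations_in_Id_M2_sl2])
  have "sl2_relations (wg_ideal_gen ?R :: 'a ncpoly set)"
    by unfold_locales (simp_all only: wg_ideal_wg_ideal_gen wg_ideal_gen_superset)
  then show "Id_M2_sl2 \<subseteq> wg_ideal_gen ?R"
    by (rule Id_M2_sl2_subset_sl2_relations [OF assms _ gen_subset])
qed

end
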